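(* There exist a compact metric space $X$ and a flow $\phi$ on $X$ which has the shadowing property, is singular-expansive and singular-equicontinuous, but is not equicontinuous.
   Context: A flow is a continuous $\phi:\mathbb{R}\times X\to X$ with $\phi_0=\mathrm{id}$, $\phi_{t+s}=\phi_t\circ\phi_s$; $\phi_I(x)=\{\phi_t(x):t\in I\}$; $Sing(\phi)$ is the set of fixed points; $dist(z,A)=\inf_{a\in A}d(z,a)$ (with $dist(z,\emptyset)=diam(X)$). Singular-expansive: for every $\epsilon>0$ there is $\delta>0$ such that whenever $x,y\in X$ and an increasing homeomorphism $s:\mathbb{R}\to\mathbb{R}$ satisfy $d(\phi_t(x),\phi_{s(t)}(y))\le\delta\,dist(\phi_t(x),Sing(\phi))$ for all $t$, then $\phi_{s(t_0)}(y)\in\phi_{[t_0-\epsilon,t_0+\epsilon]}(x)$ for some $t_0$. Equicontinuous: for every $\epsilon>0$ there is $\delta>0$ such that $d(x,y)\le\delta$ implies $d(\phi_t(x),\phi_t(y))\le\epsilon$ for all $t\in\mathbb{R}$. Singular-equicontinuous: for every $\epsilon>0$ there is $\delta>0$ such that $d(x,y)\le\delta\,dist(x,Sing(\phi))$ implies $d(\phi_t(x),\phi_t(y))\le\epsilon$ for all $t\in\mathbb{R}$. Shadowing property: for $\delta,T>0$ a $(\delta,T)$-pseudo orbit is a sequence $(x_i,t_i)_{i\in\mathbb{Z}}$ with $x_i\in X$, $t_i\ge T$, $d(\phi_{t_i}(x_i),x_{i+1})\le\delta$. Let $Rep(\epsilon)$ be the set of increasing homeomorphisms $s:\mathbb{R}\to\mathbb{R}$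 with $|\frac{s(t)-s(r)}{t-r}-1|\le\epsilon$ for all $t\ne r$. Set $S(0)=0$, $S(i)=t_0+\dots+t_{i-1}$ for $i>0$, $S(i)=-t_{-1}-\dots-t_{i}$ for $i<0$. The pseudo orbit is $\epsilon$-shadowed if there are $x\in X$ and $s\in Rep(\epsilon)$ with $d(\phi_{s(t)}(x),\phi_{t-S(i)}(x_i))\le\epsilon$ for all $i\in\mathbb{Z}$ and $S(i)\le t<S(i+1)$. $\phi$ has the shadowing property if for every $\epsilon>0$ there is $\delta>0$ such that every $(\delta,1)$-pseudo orbit can be $\epsilon$-shadowed. *)

theory Defs
  imports "HOL-Analysis.Analysis"
begin

definition is_flow :: "'a set \<Rightarrow> ('a \<Rightarrow> 'a \<Rightarrow> real) \<Rightarrow> (real \<Rightarrow> 'a \<Rightarrow> 'a) \<Rightarrow> bool" where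
  "is_flow X d \<phi> \<longleftrightarrow>
     continuous_map (prod_topology euclideanreal (Metric_space.mtopology X d))
                    (Metric_space.mtopology X d) (\<lambda>(t, x). \<phi> t x) \<and>
     (\<forall>x\<in>X. \<phi> 0 x = x) \<and>
     (\<forall>x\<in>X. \<forall>t s. \<phi> (t + s) x = \<phi> t (\<phi> s x))"

definition Sing :: "'a set \<Rightarrow> (real \<Rightarrow> 'a \<Rightarrow> 'a) \<Rightarrow> 'a set" where
  "Sing X \<phi> = {x\<in>X. \<forall>t. \<phi> t x = x}"

definition diam_sp :: "'a set \<Rightarrow> ('a \<Rightarrow> 'a \<Rightarrow> real) \<Rightarrow> real" where
  "diam_sp X d = (SUP p\<in>X \<times> X. d (fst p) (snd p))"

definition dist_set :: "'a set \<Rightarrow> ('a \<Rightarrow> 'a \<Rightarrow> real) \<Rightarrow> 'a \<Rightarrow> 'a set \<Rightarrow> real" where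
  "dist_set X d z A = (if A = {} then diam_sp X d else (INF a\<in>A. d z a))"

definition orbit_seg :: "(real \<Rightarrow> 'a \<Rightarrow> 'a) \<Rightarrow> real set \<Rightarrow> 'a \<Rightarrow> 'a set" where
  "orbit_seg \<phi> I x = (\<lambda>t. \<phi> t x) ` I"

definition inc_homeo :: "(real \<Rightarrow> real) \<Rightarrow> bool" where
  "inc_homeo s \<longleftrightarrow> strict_mono s \<and> (\<exists>g. homeomorphism UNIV UNIV s g)"

definition singular_expansive :: "'a set \<Rightarrow> ('a \<Rightarrow> 'a \<Rightarrow> real) \<Rightarrow> (real \<Rightarrow> 'a \<Rightarrow> 'a) \<Rightarrow> bool" where
  "singular_expansive X d \<phi> \<longleftrightarrow>
     (\<forall>\<epsilon>>0. \<exists>\<delta>>0. \<forall>x\<in>X. \<forall>y\<in>X. \<forall>s. inc_homeo s \<and>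
        (\<forall>t. d (\<phi> t x) (\<phi> (s t) y) \<le> \<delta> * dist_set X d (\<phi> t x) (Sing X \<phi>))
        \<longrightarrow> (\<exists>t0. \<phi> (s t0) y \<in> orbit_seg \<phi> {t0 - \<epsilon> .. t0 + \<epsilon>} x))"

definition equicontinuous_flow :: "'a set \<Rightarrow> ('a \<Rightarrow> 'a \<Rightarrow> real) \<Rightarrow> (real \<Rightarrow> 'a \<Rightarrow> 'a) \<Rightarrow> bool" where
  "equicontinuous_flow X d \<phi> \<longleftrightarrow>
     (\<forall>\<epsilon>>0. \<exists>\<delta>>0. \<forall>x\<in>X. \<forall>y\<in>X. d x y \<le> \<delta> \<longrightarrow> (\<forall>t. d (\<phi> t x) (\<phi> t y) \<le> \<epsilon>))"

definition singular_equicontinuous :: "'a set \<Rightarrow> ('a \<Rightarrow> 'a \<Rightarrow> real) \<Rightarrow> (real \<Rightarrow> 'a \<Rightarrow> 'a) \<Rightarrow> bool" where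
  "singular_equicontinuous X d \<phi> \<longleftrightarrow>
     (\<forall>\<epsilon>>0. \<exists>\<delta>>0. \<forall>x\<in>X. \<forall>y\<in>X. d x y \<le> \<delta> * dist_set X d x (Sing X \<phi>) \<longrightarrow>
        (\<forall>t. d (\<phi> t x) (\<phi> t y) \<le> \<epsilon>))"

definition pseudo_orbit :: "'a set \<Rightarrow> ('a \<Rightarrow> 'a \<Rightarrow> real) \<Rightarrow> (real \<Rightarrow> 'a \<Rightarrow> 'a) \<Rightarrow> real \<Rightarrow> real
     \<Rightarrow> (int \<Rightarrow> 'a) \<Rightarrow> (int \<Rightarrow> real) \<Rightarrow> bool" where
  "pseudo_orbit X d \<phi> \<delta> T xs ts \<longleftrightarrow>
     (\<forall>i. xs i \<in> X \<and> ts i \<ge> T \<and> d (\<phi> (ts i) (xs i)) (xs (i + 1)) \<le> \<delta>)"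

definition Rep :: "real \<Rightarrow> (real \<Rightarrow> real) set" where
  "Rep \<epsilon> = {s. inc_homeo s \<and> (\<forall>t r. t \<noteq> r \<longrightarrow> \<bar>(s t - s r) / (t - r) - 1\<bar> \<le> \<epsilon>)}"

definition Ssum :: "(int \<Rightarrow> real) \<Rightarrow> int \<Rightarrow> real" where
  "Ssum ts i = (if i \<ge> 0 then (\<Sum>j\<in>{0..<i}. ts j) else - (\<Sum>j\<in>{i..<0}. ts j))"

definition shadowed :: "'a set \<Rightarrow> ('a \<Rightarrow> 'a \<Rightarrow> real) \<Rightarrow> (real \<Rightarrow> 'a \<Rightarrow> 'a) \<Rightarrow> real
     \<Rightarrow> (int \<Rightarrow> 'a) \<Rightarrow> (int \<Rightarrow> real) \<Rightarrow> bool" where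
  "shadowed X d \<phi> \<epsilon> xs ts \<longleftrightarrow>
     (\<exists>x\<in>X. \<exists>s\<in>Rep \<epsilon>. \<forall>i t. Ssum ts i \<le> t \<and> t < Ssum ts (i + 1) \<longrightarrow>
        d (\<phi> (s t) x) (\<phi> (t - Ssum ts i) (xs i)) \<le> \<epsilon>)"

definition shadowing_property :: "'a set \<Rightarrow> ('a \<Rightarrow> 'a \<Rightarrow> real) \<Rightarrow> (real \<Rightarrow> 'a \<Rightarrow> 'a) \<Rightarrow> bool" where
  "shadowing_property X d \<phi> \<longleftrightarrow>
     (\<forall>\<epsilon>>0. \<exists>\<delta>>0. \<forall>xs ts. pseudo_orbit X d \<phi> \<delta> 1 xs ts \<longrightarrow> shadowed X d \<phi> \<epsilon> xs ts)"

end

theory Submission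
  imports Defs
begin

text \<open>The example is the flow on X = [-1, 1] whose restriction to (-1, 1) is translation by t in
  the coordinate artanh, with fixed points -1 and 1.  A point within \<delta> (1 - |x|) of x lies on the
  orbit of x within time 2\<delta>, which gives singular expansivity and singular equicontinuity, while
  points arbitrarily close to -1 are carried to 0, so the flow is not equicontinuous.  A pseudo
  orbit is trapped: it stays in [\<theta>, 1] once there and stays in [-1, -\<theta>) in the past once
  there, and in between it advances by at least 1/2 per jump in the artanh coordinate, so it
  crosses the middle zone in boundedly many jumps.  It is then shadowed by -1, by 1, or by the
  true orbit through its last point below -\<theta>, with the identity reparametrisation.\<close>

lemma mtopology_interval: "Metric_space.mtopology {-1..1::real} dist = top_of_set {-1..1}"
proof -
  interpret Submetric UNIV dist "{-1..1::real}"
    by (simp add: Submetric_def Submetric_axioms_def Met_TC.Metric_space_axioms)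
  show ?thesis using mtopology_submetric by simp
qed

lemma Metric_space_interval: "Metric_space {-1..1::real} dist"
  by (simp add: Met_TC.subspace)

lemma compact_space_interval: "compact_space (Metric_space.mtopology {-1..1::real} dist)"
  by (simp add: mtopology_interval compact_space_subtopology)

lemma abs_tanh_less_1: "\<bar>tanh (t::real)\<bar> < 1"
  using tanh_real_bounds[of t] by auto

lemma tanh_artanh: "\<bar>x::real\<bar> < 1 \<Longrightarrow> tanh (artanh x) = x"
proof -
  assume x: "\<bar>x\<bar> < 1"
  then have "exp (- 2 * artanh x) = inverse ((1 + x) / (1 - x))"
    by (simp add: artanh_def exp_minus exp_ln divide_pos_pos)
  also have "\<dots> = (1 - x) / (1 + x)" by simp
  finally have e: "exp (- 2 * artanh x) = (1 - x) / (1 + x)" .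
  have "0 < 1 + x" using x by simp
  then show ?thesis unfolding tanh_real_altdef e by (simp add: field_simps)
qed

lemma artanh_le_iff: "\<bar>x\<bar> < 1 \<Longrightarrow> \<bar>y\<bar> < 1 \<Longrightarrow> artanh x \<le> artanh y \<longleftrightarrow> x \<le> (y::real)"
  by (metis tanh_artanh tanh_real_le_iff)

lemma abs_artanh_le:
  assumes "\<bar>x\<bar> \<le> r" "r < (1::real)"
  shows "\<bar>artanh x\<bar> \<le> artanh r"
proof -
  have "\<bar>x\<bar> < 1" "\<bar>r\<bar> < 1" using assms by auto
  then have "artanh x \<le> artanh r" "artanh (-r) \<le> artanh x"
    using assms artanh_le_iff[of x r] artanh_le_iff[of "-r" x] by auto
  then show ?thesis using \<open>\<bar>r\<bar> < 1\<close> by (auto simp: abs_le_iff)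
qed

lemma tanh_lipschitz: "\<bar>tanh a - tanh b\<bar> \<le> \<bar>a - (b::real)\<bar>"
proof -
  have le: "tanh y - tanh x \<le> y - x" if "x < y" for x y :: real
  proof -
    have "((\<lambda>z. tanh z) has_real_derivative (1 - tanh z ^ 2) * 1) (at z)" for z :: real
      by (rule has_field_derivative_tanh) (auto intro: DERIV_ident)
    from MVT2[OF \<open>x < y\<close> this] obtain z where "tanh y - tanh x = (y - x) * (1 - tanh z ^ 2)"
      by auto
    also have "\<dots> \<le> y - x" using \<open>x < y\<close> by (simp add: mult_left_le)
    finally show ?thesis .
  qed
  show ?thesis using le[of a b] le[of b a] by (cases a b rule: linorder_cases) auto
qed

lemma artanh_lipschitz:
  assumes "\<bar>a\<bar> \<le> r" "\<bar>b\<bar> \<le> r" "r < (1::real)"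
  shows "\<bar>artanh a - artanh b\<bar> \<le> \<bar>a - b\<bar> / (1 - r^2)"
proof -
  have r2: "r^2 < 1" using assms by (simp add: abs_square_less_1)
  have le: "\<bar>artanh y - artanh x\<bar> \<le> (y - x) / (1 - r^2)"
    if "x < y" "\<bar>x\<bar> \<le> r" "\<bar>y\<bar> \<le> r" for x y
  proof -
    have "\<And>z. x \<le> z \<Longrightarrow> z \<le> y \<Longrightarrow> (artanh has_real_derivative 1 / (1 - z^2)) (at z)"
      using that assms by (intro artanh_real_has_field_derivative) auto
    from MVT2[OF \<open>x < y\<close> this] obtain z where z: "x < z" "z < y"
      and eq: "artanh y - artanh x = (y - x) * (1 / (1 - z^2))" by blast
    have "z^2 \<le> r^2" using z that by (intro power2_le_iff_abs_le[THEN iffD2]) auto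
    then have "(y - x) / (1 - z^2) \<le> (y - x) / (1 - r^2)"
      using r2 \<open>x < y\<close> by (intro divide_left_mono) auto
    moreover have "z^2 < 1" using \<open>z^2 \<le> r^2\<close> r2 by simp
    ultimately show ?thesis unfolding eq using \<open>x < y\<close> by simp
  qed
  show ?thesis using le[of a b] le[of b a] assms
    by (cases a b rule: linorder_cases) (auto simp: abs_minus_commute)
qed

definition tanh_flow :: "real \<Rightarrow> real \<Rightarrow> real" where
  "tanh_flow t x = (x + tanh t) / (1 + x * tanh t)"

lemma tanh_flow_denom_pos: "\<bar>x\<bar> \<le> 1 \<Longrightarrow> 0 < 1 + x * tanh (t::real)"
proof -
  assume "\<bar>x\<bar> \<le> 1"
  then have "\<bar>x\<bar> * \<bar>tanh t\<bar> \<le> \<bar>tanh t\<bar>"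
    by (intro mult_left_le_one_le) auto
  then have "\<bar>x * tanh t\<bar> < 1"
    using abs_tanh_less_1[of t] by (simp add: abs_mult)
  then show ?thesis by linarith
qed

lemma tanh_flow_interior: "\<bar>x\<bar> < 1 \<Longrightarrow> tanh_flow t x = tanh (artanh x + t)"
  unfolding tanh_flow_def
  by (simp add: tanh_add tanh_artanh cosh_real_pos[THEN less_imp_neq, symmetric])

lemma abs_tanh_flow_less_1: "\<bar>x\<bar> < 1 \<Longrightarrow> \<bar>tanh_flow t x\<bar> < 1"
  by (simp add: tanh_flow_interior abs_tanh_less_1)

lemma artanh_tanh_flow: "\<bar>x\<bar> < 1 \<Longrightarrow> artanh (tanh_flow t x) = artanh x + t"
  by (simp add: tanh_flow_interior artanh_tanh_real)

lemma tanh_flow_lipschitz_artanh: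
  "\<bar>x\<bar> < 1 \<Longrightarrow> \<bar>y\<bar> < 1 \<Longrightarrow> \<bar>tanh_flow t x - tanh_flow t y\<bar> \<le> \<bar>artanh x - artanh y\<bar>"
  using tanh_lipschitz[of "artanh x + t" "artanh y + t"] by (simp add: tanh_flow_interior)

lemma tanh_flow_0 [simp]: "tanh_flow 0 x = x"
  by (simp add: tanh_flow_def)

lemma tanh_flow_1 [simp]: "tanh_flow t 1 = 1"
  using tanh_flow_denom_pos[of 1 t] by (simp add: tanh_flow_def)

lemma tanh_flow_minus_1 [simp]: "tanh_flow t (-1) = -1"
  using tanh_flow_denom_pos[of "-1" t] by (simp add: tanh_flow_def field_simps)

lemma tanh_flow_diff:
  "\<bar>x\<bar> \<le> 1 \<Longrightarrow> \<bar>y\<bar> \<le> 1 \<Longrightarrow>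
   tanh_flow t x - tanh_flow t y = (x - y) * (1 - tanh t ^ 2) / ((1 + x * tanh t) * (1 + y * tanh t))"
  using tanh_flow_denom_pos[of x t] tanh_flow_denom_pos[of y t] unfolding tanh_flow_def
  by (simp add: field_simps power2_eq_square)

lemma tanh_flow_mono:
  assumes "\<bar>x\<bar> \<le> 1" "\<bar>y\<bar> \<le> 1" "x \<le> y"
  shows "tanh_flow t x \<le> tanh_flow t y"
proof -
  have "tanh t ^ 2 < 1" using abs_tanh_less_1[of t] by (simp add: abs_square_less_1)
  then have "0 \<le> (y - x) * (1 - tanh t ^ 2) / ((1 + y * tanh t) * (1 + x * tanh t))"
    using assms tanh_flow_denom_pos[of x t] tanh_flow_denom_pos[of y t]
    by (intro divide_nonneg_pos mult_nonneg_nonneg) auto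
  then show ?thesis using tanh_flow_diff[of y x t] assms by simp
qed

lemma tanh_flow_bounds: "\<bar>x\<bar> \<le> 1 \<Longrightarrow> -1 \<le> tanh_flow t x \<and> tanh_flow t x \<le> 1"
  using tanh_flow_mono[of "-1" x t] tanh_flow_mono[of x 1 t] by (auto simp: abs_le_iff)

lemma abs_tanh_flow_le_1: "\<bar>x\<bar> \<le> 1 \<Longrightarrow> \<bar>tanh_flow t x\<bar> \<le> 1"
  using tanh_flow_bounds[of x t] by (auto simp: abs_le_iff)

lemma tanh_flow_add: "\<bar>x\<bar> \<le> 1 \<Longrightarrow> tanh_flow (t + s) x = tanh_flow t (tanh_flow s x)"
proof -
  assume "\<bar>x\<bar> \<le> 1"
  then consider "\<bar>x\<bar> < 1" | "x = 1" | "x = -1" by linarith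
  then show ?thesis
  proof cases
    case 1
    then have "tanh_flow t (tanh_flow s x) = tanh (artanh (tanh_flow s x) + t)"
      by (intro tanh_flow_interior abs_tanh_flow_less_1)
    with 1 show ?thesis by (simp add: artanh_tanh_flow tanh_flow_interior artanh_tanh_real algebra_simps)
  qed simp_all
qed

lemma tanh_flow_minus_id:
  "\<bar>x\<bar> \<le> 1 \<Longrightarrow> tanh_flow t x - x = tanh t * (1 - x^2) / (1 + x * tanh t)"
  using tanh_flow_denom_pos[of x t] unfolding tanh_flow_def
  by (simp add: field_simps power2_eq_square)

lemma tanh_flow_ge_id:
  assumes "\<bar>x\<bar> \<le> 1" "0 \<le> t"
  shows "x \<le> tanh_flow t x"
proof -
  have "0 \<le> tanh t * (1 - x^2) / (1 + x * tanh t)"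
    using assms tanh_flow_denom_pos[of x t]
    by (intro divide_nonneg_pos mult_nonneg_nonneg) (auto simp: abs_square_le_1)
  then show ?thesis using tanh_flow_minus_id[OF assms(1), of t] by simp
qed

lemma tanh_flow_mono_time: "\<bar>x\<bar> \<le> 1 \<Longrightarrow> t \<le> t' \<Longrightarrow> tanh_flow t x \<le> tanh_flow t' x"
  using tanh_flow_ge_id[OF abs_tanh_flow_le_1, of x "t' - t" t] tanh_flow_add[of x "t' - t" t]
  by simp

lemma tanh_flow_1_displacement:
  assumes "\<bar>x\<bar> \<le> r" "r < 1"
  shows "tanh 1 * (1 - r^2) / 2 \<le> tanh_flow 1 x - x"
proof -
  have x1: "\<bar>x\<bar> \<le> 1" using assms by simp
  have "x^2 \<le> r^2" using assms by (simp add: power2_le_iff_abs_le)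
  moreover have "r^2 \<le> 1" using assms by (simp add: abs_square_le_1)
  moreover have "0 < 1 + x * tanh 1" "1 + x * tanh 1 \<le> 2"
    using tanh_flow_denom_pos[OF x1, of 1] x1 abs_tanh_less_1[of 1]
    by (auto simp: abs_le_iff mult_le_one mult_le_cancel_left1)
  ultimately have "tanh 1 * (1 - r^2) / 2 \<le> tanh 1 * (1 - x^2) / (1 + x * tanh 1)"
    by (intro frac_le mult_left_mono) auto
  then show ?thesis using tanh_flow_minus_id[OF x1, of 1] by simp
qed

lemma is_flow_tanh_flow: "is_flow {-1..1::real} dist tanh_flow"
proof -
  have "1 + x * tanh t \<noteq> 0" if "x \<in> {-1..1}" for t x :: real
    using tanh_flow_denom_pos[of x t] that by (simp add: abs_le_iff)
  then have "continuous_on (UNIV \<times> {-1..1::real}) (\<lambda>(t, x). tanh_flow t x)"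
    unfolding tanh_flow_def case_prod_beta by (intro continuous_intros) auto
  moreover have "prod_topology euclideanreal (top_of_set {-1..1::real}) = top_of_set (UNIV \<times> {-1..1})"
    by (metis prod_topology_subtopology_eu subtopology_UNIV)
  ultimately show ?thesis
    unfolding is_flow_def mtopology_interval using tanh_flow_bounds tanh_flow_add
    by (auto simp: abs_le_iff)
qed

lemma Sing_tanh_flow: "Sing {-1..1::real} tanh_flow = {-1, 1}"
proof -
  have "tanh_flow 1 x \<noteq> x" if "\<bar>x\<bar> < 1" for x
  proof -
    have "0 < tanh 1 * (1 - \<bar>x\<bar>^2) / 2"
      using that by (simp add: abs_square_less_1)
    then show ?thesis using tanh_flow_1_displacement[of x "\<bar>x\<bar>"] that by auto
  qed
  then show ?thesis unfolding Sing_def by (force simp: abs_le_iff)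
qed

lemma dist_set_Sing_tanh_flow:
  "\<bar>z\<bar> \<le> 1 \<Longrightarrow> dist_set {-1..1::real} dist z (Sing {-1..1} tanh_flow) = 1 - \<bar>z\<bar>"
  unfolding Sing_tanh_flow dist_set_def by (simp add: dist_real_def cInf_insert inf_min)

section \<open>Singular expansivity and singular equicontinuity\<close>

lemma tanh_flow_time_lipschitz:
  "\<bar>x\<bar> \<le> 1 \<Longrightarrow> \<bar>tanh_flow t x - tanh_flow s x\<bar> \<le> \<bar>t - s\<bar>"
proof -
  assume "\<bar>x\<bar> \<le> 1"
  then consider "\<bar>x\<bar> < 1" | "x = 1" | "x = -1" by linarith
  then show ?thesis
    by cases (use tanh_lipschitz[of "artanh x + t" "artanh x + s"] in \<open>simp_all add: tanh_flow_interior\<close>)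
qed

lemma tanh_flow_relatively_close:
  assumes x: "\<bar>x\<bar> \<le> 1" and y: "\<bar>y\<bar> \<le> 1" and "0 \<le> \<delta>" "\<delta> \<le> 1/2"
    and close: "\<bar>x - y\<bar> \<le> \<delta> * (1 - \<bar>x\<bar>)"
  obtains c where "\<bar>c\<bar> \<le> 2 * \<delta>" "y = tanh_flow c x"
proof (cases "\<bar>x\<bar> < 1")
  case True
  define r where "r = \<bar>x\<bar> + \<delta> * (1 - \<bar>x\<bar>)"
  have "\<delta> * (1 - \<bar>x\<bar>) \<le> (1 - \<bar>x\<bar>) / 2" "0 \<le> \<delta> * (1 - \<bar>x\<bar>)"
    using \<open>0 \<le> \<delta>\<close> \<open>\<delta> \<le> 1/2\<close> True by (auto intro: mult_right_mono)
  moreover have "\<bar>y\<bar> - \<bar>x\<bar> \<le> \<bar>x - y\<bar>" by (rule abs_triangle_ineq2_sym)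
  ultimately have r: "\<bar>x\<bar> \<le> r" "\<bar>y\<bar> \<le> r" "(1 - \<bar>x\<bar>) / 2 \<le> 1 - r" "0 \<le> r"
    using close unfolding r_def by auto
  then have "r < 1" "(1 - \<bar>x\<bar>) / 2 \<le> 1 - r^2"
    using True by (auto simp: power2_eq_square mult_left_le_one_le intro: order_trans)
  then have "\<bar>artanh y - artanh x\<bar> \<le> \<bar>y - x\<bar> / (1 - r^2)"
    using artanh_lipschitz[of y r x] r by simp
  also have "\<dots> \<le> (\<delta> * (1 - \<bar>x\<bar>)) / ((1 - \<bar>x\<bar>) / 2)"
    using close True \<open>(1 - \<bar>x\<bar>) / 2 \<le> 1 - r^2\<close> by (intro frac_le) (auto simp: abs_minus_commute)
  also have "\<dots> = 2 * \<delta>" using True by (simp add: field_simps)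
  finally have "\<bar>artanh y - artanh x\<bar> \<le> 2 * \<delta>" .
  moreover have "y = tanh_flow (artanh y - artanh x) x"
    using True r \<open>r < 1\<close> by (simp add: tanh_flow_interior tanh_artanh)
  ultimately show ?thesis by (rule that)
next
  case False
  then have "y = x" using x close by auto
  then show ?thesis using that[of 0] \<open>0 \<le> \<delta>\<close> by simp
qed

lemma singular_equicontinuous_tanh_flow: "singular_equicontinuous {-1..1::real} dist tanh_flow"
  unfolding singular_equicontinuous_def
proof (intro allI impI)
  fix \<epsilon> :: real assume "0 < \<epsilon>"
  define \<delta> where "\<delta> = min (1/2) (\<epsilon>/2)"
  have \<delta>: "0 \<le> \<delta>" "\<delta> \<le> 1/2" "2 * \<delta> \<le> \<epsilon>" using \<open>0 < \<epsilon>\<close> by (auto simp: \<delta>_def)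
  have "dist (tanh_flow t x) (tanh_flow t y) \<le> \<epsilon>"
    if "x \<in> {-1..1}" "y \<in> {-1..1}"
      and "dist x y \<le> \<delta> * dist_set {-1..1} dist x (Sing {-1..1} tanh_flow)" for x y t
  proof -
    have x: "\<bar>x\<bar> \<le> 1" and "\<bar>y\<bar> \<le> 1" "\<bar>x - y\<bar> \<le> \<delta> * (1 - \<bar>x\<bar>)"
      using that by (auto simp: dist_set_Sing_tanh_flow dist_real_def)
    then obtain c where "\<bar>c\<bar> \<le> 2 * \<delta>" "y = tanh_flow c x"
      using tanh_flow_relatively_close \<delta>(1,2) by blast
    with \<delta>(3) show ?thesis
      using tanh_flow_time_lipschitz[OF x, of t "t + c"] by (simp add: dist_real_def tanh_flow_add[OF x])
  qed
  moreover have "0 < \<delta>" using \<open>0 < \<epsilon>\<close> by (simp add: \<delta>_def)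
  ultimately show "\<exists>\<delta>>0. \<forall>x\<in>{-1..1}. \<forall>y\<in>{-1..1}.
      dist x y \<le> \<delta> * dist_set {-1..1} dist x (Sing {-1..1} tanh_flow) \<longrightarrow>
      (\<forall>t. dist (tanh_flow t x) (tanh_flow t y) \<le> \<epsilon>)"
    by blast
qed

text \<open>Closeness at the single time t = 0 already forces the conclusion.\<close>
lemma singular_expansive_tanh_flow: "singular_expansive {-1..1::real} dist tanh_flow"
  unfolding singular_expansive_def
proof (intro allI impI)
  fix \<epsilon> :: real assume "0 < \<epsilon>"
  define \<delta> where "\<delta> = min (1/2) (\<epsilon>/2)"
  have \<delta>: "0 \<le> \<delta>" "\<delta> \<le> 1/2" "2 * \<delta> \<le> \<epsilon>" using \<open>0 < \<epsilon>\<close> by (auto simp: \<delta>_def)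
  have "\<exists>t0. tanh_flow (s t0) y \<in> orbit_seg tanh_flow {t0 - \<epsilon> .. t0 + \<epsilon>} x"
    if "x \<in> {-1..1}" "y \<in> {-1..1}"
      and "\<forall>t. dist (tanh_flow t x) (tanh_flow (s t) y)
                 \<le> \<delta> * dist_set {-1..1} dist (tanh_flow t x) (Sing {-1..1} tanh_flow)" for x y s
  proof -
    have "\<bar>x\<bar> \<le> 1" "\<bar>tanh_flow (s 0) y\<bar> \<le> 1" "\<bar>x - tanh_flow (s 0) y\<bar> \<le> \<delta> * (1 - \<bar>x\<bar>)"
      using that(1,2) that(3)[rule_format, of 0]
      by (auto simp: abs_tanh_flow_le_1 dist_set_Sing_tanh_flow dist_real_def)
    then obtain c where "\<bar>c\<bar> \<le> 2 * \<delta>" "tanh_flow (s 0) y = tanh_flow c x"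
      using tanh_flow_relatively_close \<delta>(1,2) by blast
    with \<delta>(3) have "tanh_flow (s 0) y \<in> orbit_seg tanh_flow {0 - \<epsilon> .. 0 + \<epsilon>} x"
      by (force simp: orbit_seg_def abs_le_iff)
    then show ?thesis by blast
  qed
  moreover have "0 < \<delta>" using \<open>0 < \<epsilon>\<close> by (simp add: \<delta>_def)
  ultimately show "\<exists>\<delta>>0. \<forall>x\<in>{-1..1}. \<forall>y\<in>{-1..1}. \<forall>s. inc_homeo s \<and>
      (\<forall>t. dist (tanh_flow t x) (tanh_flow (s t) y)
             \<le> \<delta> * dist_set {-1..1} dist (tanh_flow t x) (Sing {-1..1} tanh_flow)) \<longrightarrow>
      (\<exists>t0. tanh_flow (s t0) y \<in> orbit_seg tanh_flow {t0 - \<epsilon> .. t0 + \<epsilon>} x)"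
    by blast
qed

text \<open>Every interior point, however close to the fixed point -1, is carried to 0.\<close>
lemma not_equicontinuous_tanh_flow: "\<not> equicontinuous_flow {-1..1::real} dist tanh_flow"
proof
  assume "equicontinuous_flow {-1..1::real} dist tanh_flow"
  then obtain \<delta> where "0 < \<delta>" and \<delta>:
    "\<forall>x\<in>{-1..1}. \<forall>y\<in>{-1..1}. dist x y \<le> \<delta> \<longrightarrow> (\<forall>t. dist (tanh_flow t x) (tanh_flow t y) \<le> 1/2)"
    unfolding equicontinuous_flow_def by (meson zero_less_divide_1_iff zero_less_numeral)
  define y where "y = -1 + min \<delta> 1"
  have "\<bar>y\<bar> < 1" "dist (-1) y \<le> \<delta>" using \<open>0 < \<delta>\<close> by (auto simp: y_def dist_real_def)
  then have "dist (tanh_flow (- artanh y) (-1)) (tanh_flow (- artanh y) y) \<le> 1/2"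
    using \<delta>[rule_format, of "-1" y "- artanh y"] by (auto simp: abs_less_iff)
  moreover have "tanh_flow (- artanh y) y = 0" using \<open>\<bar>y\<bar> < 1\<close> by (simp add: tanh_flow_interior)
  ultimately show False by (simp add: dist_real_def)
qed

section \<open>Shadowing\<close>

lemma int_downward_closed:
  assumes down: "\<And>k. P (k + 1) \<Longrightarrow> P k" and "k \<le> j" "P j"
  shows "P (k::int)"
  using assms(2,3) by (induction j rule: int_ge_induct) (auto intro: down)

lemma int_last_index:
  assumes "P i" "\<not> P j" and down: "\<And>k. P (k + 1) \<Longrightarrow> P k"
  obtains m :: int where "P m" "\<not> P (m + 1)"
proof (rule ccontr)
  assume "\<not> thesis"
  with that have up: "P k \<Longrightarrow> P (k + 1)" for k by blast
  have "P k" if "i \<le> k" for k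
    using that by (induction k rule: int_ge_induct) (use \<open>P i\<close> up in auto)
  moreover have "i \<le> j" using int_downward_closed[of P j i, OF down] assms(1,2) by force
  ultimately show False using \<open>\<not> P j\<close> by blast
qed

lemma Ssum_add_one: "Ssum ts (i + 1) = Ssum ts i + ts i"
proof (cases "0 \<le> i")
  case True
  then have "{0..<i + 1} = insert i {0..<i}" by auto
  with True show ?thesis by (simp add: Ssum_def)
next
  case False
  then have "{i..<0} = insert i {i + 1..<0}" by auto
  with False show ?thesis by (cases "i = -1") (simp_all add: Ssum_def)
qed

lemma Ssum_mono:
  assumes "\<And>i. 0 \<le> ts i" "i \<le> j"
  shows "Ssum ts i \<le> Ssum ts j"
  using assms(2)
  by (induction j rule: int_ge_induct) (auto simp: Ssum_add_one intro: add_increasing2 assms(1))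

text \<open>\<theta> separates the middle zone [-\<theta>, \<theta>) from the two end zones; its \<delta>-neighbourhood
  lies in [-h, h], where artanh is K-Lipschitz and bounded by A in absolute value.\<close>
locale tanh_flow_pseudo_orbit =
  fixes e \<delta> :: real and xs ts :: "int \<Rightarrow> real" and \<theta> h K A :: real
  defines "\<theta> \<equiv> 1 - e / 2" and "h \<equiv> 1 - e / 4" and "K \<equiv> 1 / (1 - h^2)" and "A \<equiv> artanh h"
  assumes e_pos: "0 < e" and e_le_1: "e \<le> 1" and \<delta>_pos: "0 < \<delta>"
    and \<delta>_le_displacement: "\<delta> \<le> tanh 1 * (1 - h^2) / 2"
    and \<delta>_small: "\<delta> * (1 + (4 * A + 1) * K) \<le> e / 2"
    and xs_bounded: "\<bar>xs i\<bar> \<le> 1"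
    and ts_ge_1: "1 \<le> ts i"
    and jump_le: "\<bar>tanh_flow (ts i) (xs i) - xs (i + 1)\<bar> \<le> \<delta>"
begin

definition shadows :: "real \<Rightarrow> bool" where
  "shadows x \<longleftrightarrow> (\<forall>i t. Ssum ts i \<le> t \<and> t < Ssum ts (i + 1) \<longrightarrow>
     \<bar>tanh_flow t x - tanh_flow (t - Ssum ts i) (xs i)\<bar> \<le> e)"

lemma h_lt_1: "h < 1" and K_ge_1: "1 \<le> K" and A_nonneg: "0 \<le> A"
proof -
  show "h < 1" using e_pos by (simp add: h_def)
  moreover have "0 \<le> h" using e_le_1 by (simp add: h_def)
  ultimately have "h^2 < 1" "0 \<le> h^2" by (auto simp: abs_square_less_1)
  then show "1 \<le> K" by (simp add: K_def)
  show "0 \<le> A" using artanh_le_iff[of 0 h] \<open>0 \<le> h\<close> \<open>h < 1\<close> by (simp add: A_def)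
qed

lemma \<delta>_plus_\<delta>_K_le: "\<delta> + \<delta> * K \<le> e / 2"
proof -
  have "\<delta> * (1 + (4 * A + 1) * K) = \<delta> + \<delta> * K + \<delta> * (4 * A * K)"
    by (simp add: algebra_simps)
  moreover have "0 \<le> \<delta> * (4 * A * K)" using K_ge_1 \<delta>_pos A_nonneg by auto
  ultimately show ?thesis using \<delta>_small by linarith
qed

lemma \<delta>_le: "\<delta> \<le> e / 4"
  using \<delta>_plus_\<delta>_K_le K_ge_1 \<delta>_pos mult_left_mono[of 1 K \<delta>] by linarith

lemma \<delta>_K_le: "\<delta> * K \<le> e / 2"
  using \<delta>_plus_\<delta>_K_le \<delta>_pos by linarith

lemma \<theta>_bounds: "0 < \<theta>" "\<theta> + \<delta> \<le> h" "1 - \<theta> = e / 2"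
  using e_le_1 \<delta>_le by (auto simp: \<theta>_def h_def)

lemma artanh_lipschitz_K: "\<bar>a\<bar> \<le> h \<Longrightarrow> \<bar>b\<bar> \<le> h \<Longrightarrow> \<bar>artanh a - artanh b\<bar> \<le> K * \<bar>a - b\<bar>"
  using artanh_lipschitz[OF _ _ h_lt_1] by (simp add: K_def)

lemma jump_preserves_lower_bound:
  assumes "\<bar>c\<bar> \<le> \<theta>" "c \<le> xs i"
  shows "c \<le> xs (i + 1)"
proof -
  have "\<bar>c\<bar> \<le> h" using assms(1) \<theta>_bounds \<delta>_pos by linarith
  then have "c + \<delta> \<le> tanh_flow 1 c"
    using tanh_flow_1_displacement[of c h] h_lt_1 \<delta>_le_displacement by linarith
  also have "\<dots> \<le> tanh_flow 1 (xs i)"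
    using assms \<theta>_bounds h_lt_1 \<delta>_pos xs_bounded by (intro tanh_flow_mono) auto
  also have "\<dots> \<le> tanh_flow (ts i) (xs i)"
    using xs_bounded ts_ge_1 by (rule tanh_flow_mono_time)
  finally show ?thesis using jump_le[of i] by (auto simp: abs_le_iff)
qed

lemma upper_forward: "\<theta> \<le> xs i \<Longrightarrow> \<theta> \<le> xs (i + 1)"
  using jump_preserves_lower_bound \<theta>_bounds by simp

lemma below_upper_backward: "xs (i + 1) < \<theta> \<Longrightarrow> xs i < \<theta>"
  using upper_forward[of i] by linarith

lemma lower_backward: "xs (i + 1) < -\<theta> \<Longrightarrow> xs i < -\<theta>"
  using jump_preserves_lower_bound[of "-\<theta>" i] \<theta>_bounds by force

lemma below_upper_backward_le: "xs j < \<theta> \<Longrightarrow> i \<le> j \<Longrightarrow> xs i < \<theta>"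
  using int_downward_closed[of "\<lambda>k. xs k < \<theta>", OF below_upper_backward] by blast

lemma upper_forward_le: "\<theta> \<le> xs i \<Longrightarrow> i \<le> j \<Longrightarrow> \<theta> \<le> xs j"
  using below_upper_backward_le by force

lemma lower_backward_le: "xs j < -\<theta> \<Longrightarrow> i \<le> j \<Longrightarrow> xs i < -\<theta>"
  using int_downward_closed[of "\<lambda>k. xs k < -\<theta>", OF lower_backward] by blast

lemma middle_step:
  assumes "\<bar>xs i\<bar> < 1" "-\<theta> \<le> xs (i + 1)" "xs (i + 1) < \<theta>"
  shows "\<bar>artanh (xs (i + 1)) - (artanh (xs i) + ts i)\<bar> \<le> \<delta> * K"
proof -
  let ?p = "tanh_flow (ts i) (xs i)"
  have "\<bar>xs (i + 1)\<bar> \<le> h" "\<bar>?p\<bar> \<le> h"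
    using assms(2,3) jump_le[of i] \<theta>_bounds by (auto simp: abs_le_iff)
  then have "\<bar>artanh (xs (i + 1)) - artanh ?p\<bar> \<le> K * \<bar>xs (i + 1) - ?p\<bar>"
    by (rule artanh_lipschitz_K)
  also have "\<dots> \<le> K * \<delta>"
    using jump_le[of i] K_ge_1 by (intro mult_left_mono) (auto simp: abs_minus_commute)
  finally show ?thesis using artanh_tanh_flow[OF assms(1)] by (simp add: mult.commute)
qed

lemma middle_run_length:
  assumes "a \<le> b" and middle: "\<And>k. a \<le> k \<Longrightarrow> k \<le> b \<Longrightarrow> -\<theta> \<le> xs k \<and> xs k < \<theta>"
  shows "of_int (b - a) \<le> 4 * A"
proof -
  have in_h: "\<bar>xs k\<bar> \<le> h" if "a \<le> k" "k \<le> b" for k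
    using middle[OF that] \<theta>_bounds \<delta>_pos by auto
  have grow: "artanh (xs a) + of_int (k - a) / 2 \<le> artanh (xs k)" if "a \<le> k" "k \<le> b" for k
    using that
  proof (induction k rule: int_ge_induct)
    case (step k)
    have "\<bar>xs k\<bar> < 1" using in_h[of k] step h_lt_1 by simp
    then have "artanh (xs k) + ts k - \<delta> * K \<le> artanh (xs (k + 1))"
      using middle_step[of k] middle[of "k + 1"] step by (auto simp: abs_le_iff)
    then show ?case using step ts_ge_1[of k] \<delta>_K_le e_le_1 by (auto simp: field_simps)
  qed simp
  have "\<bar>artanh (xs a)\<bar> \<le> A" "\<bar>artanh (xs b)\<bar> \<le> A"
    using abs_artanh_le in_h \<open>a \<le> b\<close> h_lt_1 by (auto simp: A_def)
  moreover have "artanh (xs a) + of_int (b - a) / 2 \<le> artanh (xs b)"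
    using grow \<open>a \<le> b\<close> by simp
  ultimately show ?thesis unfolding abs_le_iff by (elim conjE) (simp add: field_simps)
qed

lemma middle_run_bounded: "\<exists>k. a \<le> k \<and> k \<le> a + \<lceil>4 * A\<rceil> + 1 \<and> \<not> (-\<theta> \<le> xs k \<and> xs k < \<theta>)"
proof (rule ccontr)
  assume "\<not> ?thesis"
  then have "of_int (a + \<lceil>4 * A\<rceil> + 1 - a) \<le> 4 * A"
    using A_nonneg by (intro middle_run_length) auto
  then show False using le_of_int_ceiling[of "4 * A"] by simp
qed

lemma Ssum_le: "i \<le> j \<Longrightarrow> Ssum ts i \<le> Ssum ts j"
  using Ssum_mono[of ts] ts_ge_1 by (meson order_trans zero_le_one)

lemma segment_below:
  assumes "xs (i + 1) < -\<theta>" "Ssum ts i \<le> t" "t < Ssum ts (i + 1)"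
  shows "tanh_flow (t - Ssum ts i) (xs i) < -\<theta> + \<delta>"
proof -
  have "tanh_flow (t - Ssum ts i) (xs i) \<le> tanh_flow (ts i) (xs i)"
    using assms xs_bounded by (intro tanh_flow_mono_time) (auto simp: Ssum_add_one)
  then show ?thesis using jump_le[of i] assms(1) by (auto simp: abs_le_iff)
qed

lemma segment_above: "\<theta> \<le> xs i \<Longrightarrow> Ssum ts i \<le> t \<Longrightarrow> \<theta> \<le> tanh_flow (t - Ssum ts i) (xs i)"
  using tanh_flow_ge_id[OF xs_bounded[of i], of "t - Ssum ts i"] by simp

lemma shadows_minus_1:
  assumes "\<And>i. xs i < -\<theta>"
  shows "shadows (-1)"
  unfolding shadows_def
proof (intro allI impI)
  fix i t assume "Ssum ts i \<le> t \<and> t < Ssum ts (i + 1)"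
  then have "tanh_flow (t - Ssum ts i) (xs i) < -\<theta> + \<delta>" using segment_below assms by blast
  moreover have "-1 \<le> tanh_flow (t - Ssum ts i) (xs i)" using tanh_flow_bounds xs_bounded by blast
  ultimately show "\<bar>tanh_flow t (-1) - tanh_flow (t - Ssum ts i) (xs i)\<bar> \<le> e"
    using \<theta>_bounds \<delta>_le by (auto simp: abs_le_iff)
qed

lemma shadows_1:
  assumes "\<And>i. \<theta> \<le> xs i"
  shows "shadows 1"
  unfolding shadows_def
proof (intro allI impI)
  fix i t assume "Ssum ts i \<le> t \<and> t < Ssum ts (i + 1)"
  then have "\<theta> \<le> tanh_flow (t - Ssum ts i) (xs i)" using segment_above assms by blast
  moreover have "tanh_flow (t - Ssum ts i) (xs i) \<le> 1" using tanh_flow_bounds xs_bounded by blast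
  ultimately show "\<bar>tanh_flow t 1 - tanh_flow (t - Ssum ts i) (xs i)\<bar> \<le> e"
    using \<theta>_bounds e_pos by (auto simp: abs_le_iff)
qed

text \<open>A pseudo orbit that never enters [-1, -\<theta>) cannot linger in the middle zone forever
  in the past, so it lies in [\<theta>, 1] throughout.\<close>
lemma upper_if_never_lower:
  assumes "\<And>i. -\<theta> \<le> xs i"
  shows "\<theta> \<le> xs j"
proof (rule ccontr)
  assume "\<not> \<theta> \<le> xs j"
  then have "xs k < \<theta>" if "k \<le> j" for k
    using below_upper_backward_le[of j k] that \<open>\<not> \<theta> \<le> xs j\<close> by simp
  then show False
    using middle_run_bounded[of "j - \<lceil>4 * A\<rceil> - 1"] assms by force
qed

end

locale tanh_flow_transition = tanh_flow_pseudo_orbit +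
  fixes m n :: int
  assumes m_le_n: "m \<le> n"
    and lower_at_m: "xs m < -\<theta>" and not_lower_after_m: "\<And>k. m < k \<Longrightarrow> -\<theta> \<le> xs k"
    and below_upper_at_n: "xs n < \<theta>" and upper_after_n: "\<theta> \<le> xs (n + 1)"
begin

definition true_orbit :: "int \<Rightarrow> real" where
  "true_orbit i = tanh_flow (Ssum ts i - Ssum ts m) (xs m)"

lemma middle_zone_between: "m < k \<Longrightarrow> k \<le> n \<Longrightarrow> -\<theta> \<le> xs k \<and> xs k < \<theta>"
  using not_lower_after_m below_upper_backward_le[OF below_upper_at_n] by blast

lemma xs_interior: "m \<le> i \<Longrightarrow> i \<le> n \<Longrightarrow> \<bar>xs i\<bar> < 1"
proof (cases "i = m")
  case True
  have "xs m \<noteq> -1"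
  proof
    assume "xs m = -1"
    then show False
      using jump_le[of m] not_lower_after_m[of "m + 1"] \<theta>_bounds \<delta>_le e_pos by auto
  qed
  then show ?thesis using True xs_bounded[of m] lower_at_m \<theta>_bounds by (auto simp: abs_le_iff)
next
  case False
  assume "m \<le> i" "i \<le> n"
  with False show ?thesis using middle_zone_between[of i] \<theta>_bounds e_pos by auto
qed

lemma transition_length: "of_int (n - m) \<le> 4 * A + 1"
proof (cases "m = n")
  case False
  then have "of_int (n - (m + 1)) \<le> 4 * A"
    using m_le_n middle_zone_between by (intro middle_run_length) auto
  then show ?thesis by simp
qed (use A_nonneg in simp)

lemma true_orbit_interior: "\<bar>true_orbit i\<bar> < 1"
  using xs_interior[OF order_refl m_le_n] by (simp add: true_orbit_def abs_tanh_flow_less_1)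

lemma true_orbit_add_one: "true_orbit (i + 1) = tanh_flow (ts i) (true_orbit i)"
proof -
  have eq: "Ssum ts (i + 1) - Ssum ts m = ts i + (Ssum ts i - Ssum ts m)"
    by (simp add: Ssum_add_one)
  show ?thesis unfolding true_orbit_def eq by (rule tanh_flow_add[OF xs_bounded])
qed

lemma drift_from_true_orbit:
  "m \<le> i \<Longrightarrow> i \<le> n \<Longrightarrow> \<bar>artanh (xs i) - artanh (true_orbit i)\<bar> \<le> of_int (i - m) * (\<delta> * K)"
proof (induction i rule: int_ge_induct)
  case (step i)
  have "\<bar>artanh (xs (i + 1)) - (artanh (xs i) + ts i)\<bar> \<le> \<delta> * K"
    using middle_step xs_interior middle_zone_between step by simp
  moreover have "artanh (true_orbit (i + 1)) = artanh (true_orbit i) + ts i"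
    using true_orbit_add_one artanh_tanh_flow[OF true_orbit_interior] by simp
  ultimately show ?case using step by (auto simp: algebra_simps abs_le_iff)
qed (simp add: true_orbit_def)

lemma true_orbit_tracks:
  assumes "m \<le> i" "i \<le> n"
  shows "\<bar>tanh_flow \<tau> (true_orbit i) - tanh_flow \<tau> (xs i)\<bar> \<le> e / 2 - \<delta>"
proof -
  have "\<bar>tanh_flow \<tau> (true_orbit i) - tanh_flow \<tau> (xs i)\<bar> \<le> of_int (i - m) * (\<delta> * K)"
    using tanh_flow_lipschitz_artanh[OF true_orbit_interior[of i] xs_interior[OF assms], of \<tau>]
      drift_from_true_orbit[OF assms] by (simp add: abs_minus_commute)
  also have "\<dots> \<le> (4 * A + 1) * (\<delta> * K)"
    using transition_length assms K_ge_1 \<delta>_pos by (intro mult_right_mono) auto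
  also have "\<dots> \<le> e / 2 - \<delta>" using \<delta>_small by (simp add: algebra_simps)
  finally show ?thesis .
qed

lemma shadows_transition: "shadows (tanh_flow (- Ssum ts m) (xs m))"
  unfolding shadows_def
proof (intro allI impI)
  fix i t assume t: "Ssum ts i \<le> t \<and> t < Ssum ts (i + 1)"
  let ?x = "tanh_flow t (tanh_flow (- Ssum ts m) (xs m))" and ?y = "tanh_flow (t - Ssum ts i) (xs i)"
  have x_eq: "?x = tanh_flow (t - Ssum ts j) (true_orbit j)" for j
    unfolding true_orbit_def tanh_flow_add[OF xs_bounded, symmetric] by (simp add: algebra_simps)
  have bounds: "-1 \<le> ?x" "?x \<le> 1" "-1 \<le> ?y" "?y \<le> 1"
    using tanh_flow_bounds xs_bounded by (auto simp: x_eq[of m] true_orbit_def)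
  consider "i < m" | "m \<le> i" "i \<le> n" | "n < i" by linarith
  then show "\<bar>?x - ?y\<bar> \<le> e"
  proof cases
    case 1
    then have "?y < -\<theta> + \<delta>"
      using segment_below t lower_backward_le[OF lower_at_m, of "i + 1"] by simp
    moreover have "?x \<le> xs m"
      using x_eq[of m] t Ssum_le[of "i + 1" m] 1 tanh_flow_mono_time[OF xs_bounded, of "t - Ssum ts m" 0 m]
      by (simp add: true_orbit_def)
    ultimately show ?thesis using bounds lower_at_m \<theta>_bounds \<delta>_le by (auto simp: abs_le_iff)
  next
    case 2
    have "\<bar>?x - ?y\<bar> \<le> e / 2 - \<delta>" using true_orbit_tracks[OF 2, of "t - Ssum ts i"] x_eq[of i] by simp
    then show ?thesis using \<delta>_pos e_pos by linarith
  next
    case 3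
    have "true_orbit (n + 1) \<le> ?x"
      using x_eq[of "n + 1"] 3 t Ssum_le[of "n + 1" i] true_orbit_interior[of "n + 1"]
        tanh_flow_ge_id[of "true_orbit (n + 1)" "t - Ssum ts (n + 1)"] by simp
    moreover have "\<theta> - e / 2 \<le> true_orbit (n + 1)"
      using true_orbit_tracks[OF m_le_n order_refl, of "ts n"] jump_le[of n] upper_after_n
      by (auto simp: true_orbit_add_one abs_le_iff)
    moreover have "\<theta> \<le> ?y"
      using segment_above upper_forward_le[OF upper_after_n, of i] t 3 by simp
    ultimately show ?thesis using bounds \<theta>_bounds by (auto simp: abs_le_iff)
  qed
qed

end

context tanh_flow_pseudo_orbit
begin

text \<open>Between the last index in [-1, -\<theta>) and the first index in [\<theta>, 1] the pseudo orbit
  crosses the middle zone, which it can only do in boundedly many jumps.\<close>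
lemma transition_exists:
  assumes "xs i0 < -\<theta>" "\<not> xs j0 < -\<theta>"
  obtains m n where "tanh_flow_transition e \<delta> xs ts m n"
proof -
  obtain m where m: "xs m < -\<theta>" "\<not> xs (m + 1) < -\<theta>"
    using int_last_index[of "\<lambda>k. xs k < -\<theta>", OF assms lower_backward] by blast
  have not_lower: "-\<theta> \<le> xs k" if "m < k" for k
    using lower_backward_le[of k "m + 1"] m(2) that by linarith
  obtain j1 where "m + 1 \<le> j1" "\<not> (-\<theta> \<le> xs j1 \<and> xs j1 < \<theta>)"
    using middle_run_bounded[of "m + 1"] by blast
  with not_lower have "\<not> xs j1 < \<theta>" by auto
  moreover have "xs m < \<theta>" using m \<theta>_bounds by linarith
  ultimately obtain n where n: "xs n < \<theta>" "\<not> xs (n + 1) < \<theta>"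
    using int_last_index[of "\<lambda>k. xs k < \<theta>", OF _ _ below_upper_backward] by blast
  have "m \<le> n" using below_upper_backward_le[of m "n + 1"] m(1) n(2) \<theta>_bounds by linarith
  with m n not_lower have "tanh_flow_transition e \<delta> xs ts m n"
    unfolding tanh_flow_transition_def tanh_flow_transition_axioms_def
    using tanh_flow_pseudo_orbit_axioms by (simp add: \<theta>_def)
  then show ?thesis by (rule that)
qed

theorem shadowing_point: "\<exists>x. \<bar>x\<bar> \<le> 1 \<and> shadows x"
proof -
  consider "\<And>i. xs i < -\<theta>" | "\<And>i. -\<theta> \<le> xs i" | i0 j0 where "xs i0 < -\<theta>" "\<not> xs j0 < -\<theta>"
    by (meson not_less)
  then show ?thesis
  proof cases
    case 1
    show ?thesis using shadows_minus_1[OF 1] by (intro exI[of _ "-1"]) simp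
  next
    case 2
    show ?thesis using shadows_1[OF upper_if_never_lower[OF 2]] by (intro exI[of _ 1]) simp
  next
    case 3
    then obtain m n where "tanh_flow_transition e \<delta> xs ts m n" by (rule transition_exists)
    then interpret tanh_flow_transition e \<delta> xs ts \<theta> h K A m n
      by (simp_all add: \<theta>_def h_def K_def A_def)
    show ?thesis using shadows_transition abs_tanh_flow_le_1[OF xs_bounded] by blast
  qed
qed

end

lemma identity_in_Rep: "0 \<le> \<epsilon> \<Longrightarrow> (\<lambda>t. t) \<in> Rep \<epsilon>"
  unfolding Rep_def inc_homeo_def using homeomorphism_ident[of UNIV]
  by (auto simp: strict_mono_def)

lemma shadowing_property_tanh_flow: "shadowing_property {-1..1::real} dist tanh_flow"
  unfolding shadowing_property_def
proof (intro allI impI)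
  fix \<epsilon> :: real assume "0 < \<epsilon>"
  define e where "e = min \<epsilon> 1"
  define h where "h = 1 - e / 4"
  define K where "K = 1 / (1 - h^2)"
  define A where "A = artanh h"
  define D where "D = 1 + (4 * A + 1) * K"
  define \<delta> where "\<delta> = min (e / (2 * D)) (tanh 1 * (1 - h^2) / 2)"
  have e: "0 < e" "e \<le> 1" "e \<le> \<epsilon>" using \<open>0 < \<epsilon>\<close> by (auto simp: e_def)
  have "h^2 < 1" "0 \<le> A" using e artanh_le_iff[of 0 h]
    by (auto simp: h_def A_def abs_square_less_1)
  then have "0 < D"
    unfolding D_def by (intro add_pos_nonneg mult_nonneg_nonneg) (auto simp: K_def)
  have "\<delta> \<le> e / (2 * D)" by (simp add: \<delta>_def)
  then have "\<delta> * D \<le> e / 2" using \<open>0 < D\<close> by (simp add: le_divide_eq algebra_simps)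
  moreover have "0 < \<delta>" "\<delta> \<le> tanh 1 * (1 - h^2) / 2"
    using \<open>0 < D\<close> \<open>h^2 < 1\<close> e by (auto simp: \<delta>_def)
  ultimately have \<delta>: "0 < \<delta>" "\<delta> * (1 + (4 * A + 1) * K) \<le> e / 2" "\<delta> \<le> tanh 1 * (1 - h^2) / 2"
    by (simp_all add: D_def)
  have "shadowed {-1..1} dist tanh_flow \<epsilon> xs ts"
    if "pseudo_orbit {-1..1} dist tanh_flow \<delta> 1 xs ts" for xs ts
  proof -
    have "tanh_flow_pseudo_orbit e \<delta> xs ts"
      using that e \<delta> unfolding pseudo_orbit_def tanh_flow_pseudo_orbit_def
      by (auto simp: h_def K_def A_def dist_real_def abs_le_iff)
    then interpret tanh_flow_pseudo_orbit e \<delta> xs ts "1 - e / 2" h K A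
      by (simp_all add: h_def K_def A_def)
    obtain x where x: "\<bar>x\<bar> \<le> 1" "shadows x" using shadowing_point by blast
    show ?thesis
      unfolding shadowed_def
    proof (intro bexI[of _ x] bexI[of _ "\<lambda>t. t"] allI impI)
      fix i t assume "Ssum ts i \<le> t \<and> t < Ssum ts (i + 1)"
      then show "dist (tanh_flow t x) (tanh_flow (t - Ssum ts i) (xs i)) \<le> \<epsilon>"
        using x(2) e(3) unfolding shadows_def dist_real_def by force
    qed (use x(1) identity_in_Rep \<open>0 < \<epsilon>\<close> in auto)
  qed
  with \<open>0 < \<delta>\<close> show "\<exists>\<delta>>0. \<forall>xs ts. pseudo_orbit {-1..1} dist tanh_flow \<delta> 1 xs ts \<longrightarrow>
      shadowed {-1..1} dist tanh_flow \<epsilon> xs ts" by blast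
qed

theorem mainTheorem10:
  shows "\<exists>(X :: real set) d \<phi>. Metric_space X d \<and>
           compact_space (Metric_space.mtopology X d) \<and>
           is_flow X d \<phi> \<and>
           shadowing_property X d \<phi> \<and>
           singular_expansive X d \<phi> \<and>
           singular_equicontinuous X d \<phi> \<and>
           \<not> equicontinuous_flow X d \<phi>"
  using Metric_space_interval compact_space_interval is_flow_tanh_flow shadowing_property_tanh_flow
    singular_expansive_tanh_flow singular_equicontinuous_tanh_flow not_equicontinuous_tanh_flow
  by blast

end
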